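(* Let $a,\lambda\in\mathbb C$ satisfy $|\lambda|<1$ and $|a-\bar a\lambda|\le 1-|\lambda|^2$, let $c>0$, and let $F:\mathbb D\to\mathbb C$ be a holomorphic function with \[ F'(z)=\frac{c}{1+az+\lambda z^2},\qquad z\in\mathbb D. \] Then $F$ maps $\mathbb D$ biholomorphically onto the convex domain $D=F(\mathbb D)$. If in addition $|a-\bar a\lambda|<1-|\lambda|^2$, then $D=F(\mathbb D)$ is a bounded strongly convex domain.
   Context: $\mathbb D=\{z\in\mathbb C:|z|<1\}$. *)

theory Defs
  imports "HOL-Complex_Analysis.Complex_Analysis"
begin

definition C2_with_partials ::
  "complex set \<Rightarrow> (complex \<Rightarrow> real) \<Rightarrow> (complex \<Rightarrow> real) \<Rightarrow> (complex \<Rightarrow> real)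
   \<Rightarrow> (complex \<Rightarrow> real) \<Rightarrow> (complex \<Rightarrow> real) \<Rightarrow> (complex \<Rightarrow> real) \<Rightarrow> bool" where
  "C2_with_partials U r rx ry rxx rxy ryy \<longleftrightarrow>
     open U \<and>
     (\<forall>z\<in>U. (r has_derivative (\<lambda>h. rx z * Re h + ry z * Im h)) (at z)) \<and>
     (\<forall>z\<in>U. (rx has_derivative (\<lambda>h. rxx z * Re h + rxy z * Im h)) (at z)) \<and>
     (\<forall>z\<in>U. (ry has_derivative (\<lambda>h. rxy z * Re h + ryy z * Im h)) (at z)) \<and>
     continuous_on U rxx \<and> continuous_on U rxy \<and> continuous_on U ryy"

text \<open>Strongly convex domain in the complex plane: a bounded convex domain with a C^2
  defining function whose gradient does not vanish on the boundary and whose real Hessian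
  is positive definite on the (real) tangent line at every boundary point
  (equivalently: C^2 boundary with strictly positive curvature).\<close>
definition strongly_convex :: "complex set \<Rightarrow> bool" where
  "strongly_convex D \<longleftrightarrow>
     open D \<and> connected D \<and> D \<noteq> {} \<and> bounded D \<and> convex D \<and>
     (\<exists>U r rx ry rxx rxy ryy.
        C2_with_partials U r rx ry rxx rxy ryy \<and>
        closure D \<subseteq> U \<and> D = {z\<in>U. r z < 0} \<and>
        (\<forall>z\<in>frontier D. r z = 0 \<and> (rx z, ry z) \<noteq> (0, 0) \<and>
           (\<forall>v w::real. (v, w) \<noteq> (0, 0) \<and> rx z * v + ry z * w = 0 \<longrightarrow>
              rxx z * v\<^sup>2 + 2 * rxy z * v * w + ryy z * w\<^sup>2 > 0)))"

end

(*
  With p z = 1 + a z + l z^2 we have 1 + z F''(z) / F'(z) = (1 - l z^2) / p z, whose real part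
  has the sign of Re ((1 - l z^2) cnj (p z)) = 1 - |l|^2 |z|^4 + Re ((a - |z|^2 cnj a l) z).
  Expressing a - s cnj a l through b = a - cnj a l and cnj b, the hypothesis |b| <= 1 - |l|^2
  bounds it below by (1 - t) (1 - |l| t) (1 - |l| t^2) for t = |z| < 1, and by 1 - |l|^2 - |b|
  on the unit circle.

  Study's criterion turns Re (1 + z F''/F') > 0 into univalence and convexity: along a circle
  |z| = r the direction s + arg F'(r e^(i s)) + pi/2 of the tangent to the image curve increases
  strictly and by exactly 2 pi, so by the mean value theorem the image circle lies strictly on
  the inner side of each of its tangent lines; the maximum principle for exp extends this to the
  closed disc, and F (|z| < r) is then the intersection of these open half-planes.

  In the strict case the positivity persists on a disc of radius rho > 1, F extends there as a
  primitive of c / p, and |G|^2 - 1 with G the inverse of the extension is a C^2 defining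
  function of F(D). On a tangent vector at F(zeta) its Hessian is
  2 |X|^2 Re (1 + zeta F''(zeta) / F'(zeta)) > 0 for some X <> 0.
*)
theory Submission
  imports Defs
begin

section \<open>Study's convexity criterion\<close>

lemma Re_i_exp_mult_cnj_exp:
  "Re (\<i> * exp A * cnj (exp B)) = - (exp (Re A + Re B) * sin (Im A - Im B))"
proof -
  have "\<i> * exp A * cnj (exp B) = \<i> * exp (A + cnj B)"
    by (simp add: exp_cnj exp_add)
  then have "Re (\<i> * exp A * cnj (exp B)) = - Im (exp (A + cnj B))"
    by (simp only: Re_i_times)
  also have "\<dots> = - (exp (Re A + Re B) * sin (Im A - Im B))"
    by (simp only: Im_exp) simp
  finally show ?thesis .
qed

lemma neg_if_derivative_turns_once:
  fixes g \<psi> C :: "real \<Rightarrow> real" and t0 t :: real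
  assumes dg: "\<And>s. (g has_real_derivative - (C s * sin (\<psi> s - \<psi> t0))) (at s)"
    and C: "\<And>s. C s > 0" and mono: "strict_mono \<psi>"
    and g: "g t0 = 0" "g (t0 + 2*pi) = 0" and period: "\<psi> (t0 + 2*pi) = \<psi> t0 + 2*pi"
    and t: "t0 < t" "t < t0 + 2*pi"
  shows "g t < 0"
proof (cases "\<psi> t - \<psi> t0 \<le> pi")
  case True
  obtain \<xi> where \<xi>: "t0 < \<xi>" "\<xi> < t" and mvt: "g t - g t0 = (t - t0) * - (C \<xi> * sin (\<psi> \<xi> - \<psi> t0))"
    using MVT2[OF t(1) dg] by blast
  have "0 < \<psi> \<xi> - \<psi> t0" "\<psi> \<xi> - \<psi> t0 < pi"
    using strict_monoD[OF mono \<xi>(1)] strict_monoD[OF mono \<xi>(2)] True by auto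
  then have "sin (\<psi> \<xi> - \<psi> t0) > 0"
    by (rule sin_gt_zero)
  then show ?thesis
    using mvt g t C[of \<xi>] by (simp add: mult_pos_neg)
next
  case False
  obtain \<xi> where \<xi>: "t < \<xi>" "\<xi> < t0 + 2*pi"
    and mvt: "g (t0 + 2*pi) - g t = (t0 + 2*pi - t) * - (C \<xi> * sin (\<psi> \<xi> - \<psi> t0))"
    using MVT2[OF t(2) dg] by blast
  have "0 < \<psi> \<xi> - \<psi> t0 - pi" "\<psi> \<xi> - \<psi> t0 - pi < pi"
    using strict_monoD[OF mono \<xi>(1)] strict_monoD[OF mono \<xi>(2)] False period by auto
  then have "sin (\<psi> \<xi> - \<psi> t0 - pi) > 0"
    by (rule sin_gt_zero)
  then have "sin (\<psi> \<xi> - \<psi> t0) < 0"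
    by simp
  then have "(t0 + 2*pi - t) * - (C \<xi> * sin (\<psi> \<xi> - \<psi> t0)) > 0"
    using t C[of \<xi>] by (simp add: mult_pos_neg)
  then show ?thesis
    using mvt g by linarith
qed

lemma has_vector_derivative_circle:
  "((\<lambda>s. of_real r * exp (\<i> * of_real s)) has_vector_derivative \<i> * (of_real r * exp (\<i> * of_real s))) (at s)"
proof -
  have "((\<lambda>x::complex. of_real r * exp (\<i> * x)) has_field_derivative \<i> * (of_real r * exp (\<i> * of_real s)))
      (at (of_real s))"
    by (auto intro!: derivative_eq_intros)
  from has_vector_derivative_real_field[OF this] show ?thesis
    by simp
qed

lemma circle_tangent_angle_strict_mono:
  fixes f1 f2 L :: "complex \<Rightarrow> complex" and R r :: real
  assumes r: "\<bar>r\<bar> < R"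
    and dL: "\<And>z. z \<in> ball 0 R \<Longrightarrow> (L has_field_derivative f2 z / f1 z) (at z)"
    and pos: "\<And>z. z \<in> ball 0 R \<Longrightarrow> Re (1 + z * f2 z / f1 z) > 0"
  shows "strict_mono (\<lambda>s. s + Im (L (of_real r * exp (\<i> * of_real s))))"
proof -
  define \<gamma> where "\<gamma> = (\<lambda>s::real. complex_of_real r * exp (\<i> * of_real s))"
  have \<gamma>: "\<gamma> s \<in> ball 0 R" for s
    using r by (simp add: \<gamma>_def norm_mult)
  have d: "((\<lambda>s. s + Im (L (\<gamma> s))) has_real_derivative Re (1 + \<gamma> s * f2 (\<gamma> s) / f1 (\<gamma> s))) (at s)" for s
  proof -
    from field_vector_diff_chain_at[OF has_vector_derivative_circle[of r s, folded \<gamma>_def] dL[OF \<gamma>]]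
    have "((\<lambda>x. L (\<gamma> x)) has_vector_derivative \<i> * \<gamma> s * (f2 (\<gamma> s) / f1 (\<gamma> s))) (at s)"
      by (simp add: o_def \<gamma>_def)
    from has_field_derivative_Im[OF this]
    have "((\<lambda>x. Im (L (\<gamma> x))) has_real_derivative Re (\<gamma> s * f2 (\<gamma> s) / f1 (\<gamma> s))) (at s)"
      by (simp only: mult.assoc times_divide_eq_right[symmetric] Im_i_times)
    from DERIV_add[OF DERIV_ident this] show ?thesis
      by simp
  qed
  have "strict_mono (\<lambda>s. s + Im (L (\<gamma> s)))"
  proof (rule strict_monoI)
    show "s + Im (L (\<gamma> s)) < s' + Im (L (\<gamma> s'))" if "s < s'" for s s'
      using DERIV_pos_imp_increasing[OF that] d pos[OF \<gamma>] by blast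
  qed
  then show ?thesis
    by (simp add: \<gamma>_def)
qed

lemma circle_image_below_tangent_param:
  fixes f f1 f2 L :: "complex \<Rightarrow> complex" and R r t0 t :: real
  assumes r: "0 < r" "r < R"
    and df: "\<And>z. z \<in> ball 0 R \<Longrightarrow> (f has_field_derivative f1 z) (at z)"
    and dL: "\<And>z. z \<in> ball 0 R \<Longrightarrow> (L has_field_derivative f2 z / f1 z) (at z)"
    and L: "\<And>z. z \<in> ball 0 R \<Longrightarrow> exp (L z) = f1 z"
    and pos: "\<And>z. z \<in> ball 0 R \<Longrightarrow> Re (1 + z * f2 z / f1 z) > 0"
    and t: "t0 < t" "t < t0 + 2*pi"
  shows "Re ((f (r * exp (\<i> * t)) - f (r * exp (\<i> * t0))) * cnj (r * exp (\<i> * t0) * f1 (r * exp (\<i> * t0)))) < 0"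
proof -
  define \<gamma> where "\<gamma> = (\<lambda>s::real. complex_of_real r * exp (\<i> * of_real s))"
  define N where "N = \<gamma> t0 * f1 (\<gamma> t0)"
  define g where "g = (\<lambda>s. Re ((f (\<gamma> s) - f (\<gamma> t0)) * cnj N))"
  \<comment> \<open>up to \<open>\<pi>/2\<close>, \<open>\<psi> s\<close> is the argument of the tangent vector \<open>\<i> * \<gamma> s * f1 (\<gamma> s)\<close> of the image curve\<close>
  define \<psi> where "\<psi> = (\<lambda>s. s + Im (L (\<gamma> s)))"
  define C where "C = (\<lambda>s. r\<^sup>2 * exp (Re (L (\<gamma> s)) + Re (L (\<gamma> t0))))"
  have \<gamma>: "\<gamma> s \<in> ball 0 R" for s
    using r by (simp add: \<gamma>_def norm_mult)
  have dg: "(g has_real_derivative Re (\<i> * \<gamma> s * f1 (\<gamma> s) * cnj N)) (at s)" for s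
  proof -
    have "((\<lambda>w. (f w - f (\<gamma> t0)) * cnj N) has_field_derivative f1 (\<gamma> s) * cnj N) (at (\<gamma> s))"
      using df[OF \<gamma>] by (auto intro!: derivative_eq_intros)
    from field_vector_diff_chain_at[OF has_vector_derivative_circle[of r s, folded \<gamma>_def] this]
    have "((\<lambda>x. (f (\<gamma> x) - f (\<gamma> t0)) * cnj N) has_vector_derivative \<i> * \<gamma> s * (f1 (\<gamma> s) * cnj N)) (at s)"
      by (simp add: o_def \<gamma>_def)
    from has_field_derivative_Re[OF this] show ?thesis
      by (simp add: g_def mult.assoc)
  qed
  have tangent: "Re (\<i> * \<gamma> s * f1 (\<gamma> s) * cnj N) =
      r\<^sup>2 * Re (\<i> * exp (\<i> * s + L (\<gamma> s)) * cnj (exp (\<i> * t0 + L (\<gamma> t0))))" for s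
  proof -
    have "\<gamma> s * f1 (\<gamma> s) = of_real r * exp (\<i> * s + L (\<gamma> s))" for s
      using L[OF \<gamma>] by (simp add: \<gamma>_def exp_add)
    then have "\<i> * \<gamma> s * f1 (\<gamma> s) * cnj N =
        r\<^sup>2 *\<^sub>R (\<i> * exp (\<i> * s + L (\<gamma> s)) * cnj (exp (\<i> * t0 + L (\<gamma> t0))))"
      unfolding N_def scaleR_conv_of_real by (simp add: mult.assoc) (simp add: power2_eq_square algebra_simps)
    then show ?thesis
      by (simp only: scaleR_complex.sel)
  qed
  have dg': "(g has_real_derivative - (C s * sin (\<psi> s - \<psi> t0))) (at s)" for s
  proof -
    have "Re (\<i> * \<gamma> s * f1 (\<gamma> s) * cnj N) = - (C s * sin (\<psi> s - \<psi> t0))"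
      unfolding tangent Re_i_exp_mult_cnj_exp by (simp add: C_def \<psi>_def algebra_simps)
    then show ?thesis
      using dg[of s] by simp
  qed
  have mono: "strict_mono \<psi>"
    unfolding \<psi>_def \<gamma>_def using circle_tangent_angle_strict_mono[OF _ dL pos] r by simp
  have period: "\<gamma> (t0 + 2*pi) = \<gamma> t0"
    by (simp add: \<gamma>_def distrib_left exp_add mult.commute)
  have "g t < 0"
  proof (rule neg_if_derivative_turns_once[OF dg' _ mono _ _ _ t])
    show "C s > 0" for s
      using r by (simp add: C_def)
    show "g t0 = 0" "g (t0 + 2*pi) = 0" "\<psi> (t0 + 2*pi) = \<psi> t0 + 2*pi"
      using period by (simp_all add: g_def \<psi>_def)
  qed
  then show ?thesis
    by (simp add: g_def \<gamma>_def N_def)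
qed

lemma circle_image_below_tangent:
  fixes f f1 f2 L :: "complex \<Rightarrow> complex" and R r :: real
  assumes r: "0 < r" "r < R"
    and df: "\<And>z. z \<in> ball 0 R \<Longrightarrow> (f has_field_derivative f1 z) (at z)"
    and dL: "\<And>z. z \<in> ball 0 R \<Longrightarrow> (L has_field_derivative f2 z / f1 z) (at z)"
    and L: "\<And>z. z \<in> ball 0 R \<Longrightarrow> exp (L z) = f1 z"
    and pos: "\<And>z. z \<in> ball 0 R \<Longrightarrow> Re (1 + z * f2 z / f1 z) > 0"
    and \<zeta>: "norm \<zeta> = r" and w: "norm w = r" "w \<noteq> \<zeta>"
  shows "Re ((f w - f \<zeta>) * cnj (\<zeta> * f1 \<zeta>)) < 0"
proof -
  have \<zeta>_eq: "\<zeta> = of_real r * exp (\<i> * of_real (Arg \<zeta>))" and w_eq: "w = of_real r * exp (\<i> * of_real (Arg w))"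
    using Arg_eq[of \<zeta>] Arg_eq[of w] \<zeta> w r by (metis norm_zero less_irrefl)+
  have "Arg w \<noteq> Arg \<zeta>"
    using \<zeta>_eq w_eq w(2) by auto
  moreover have "- pi < Arg w" "Arg w \<le> pi" "- pi < Arg \<zeta>" "Arg \<zeta> \<le> pi"
    using Arg_bounded by auto
  moreover have "exp (\<i> * of_real (Arg w + 2*pi)) = exp (\<i> * of_real (Arg w))"
    by (simp add: distrib_left exp_add mult.commute)
  ultimately obtain t where t: "Arg \<zeta> < t" "t < Arg \<zeta> + 2*pi" "w = of_real r * exp (\<i> * of_real t)"
    using w_eq by (cases "Arg w > Arg \<zeta>") (auto intro: that[of "Arg w"] that[of "Arg w + 2*pi"])
  show ?thesis
    using circle_image_below_tangent_param[OF r df dL L pos t(1,2)] \<zeta>_eq t(3) by simp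
qed

lemma Re_neg_in_ball_if_nonpos_on_sphere:
  fixes h :: "complex \<Rightarrow> complex"
  assumes holh: "h holomorphic_on S" and S: "open S" "cball c r \<subseteq> S"
    and sphere: "\<And>w. w \<in> sphere c r \<Longrightarrow> Re (h w) \<le> 0"
    and z: "z \<in> ball c r" and h': "deriv h z \<noteq> 0"
  shows "Re (h z) < 0"
proof -
  define \<Phi> where "\<Phi> = (\<lambda>w. exp (h w))"
  have r: "0 < r"
    using z by (metis mem_ball zero_le_dist le_less_trans)
  have hol\<Phi>: "\<Phi> holomorphic_on S"
    unfolding \<Phi>_def using holh by (intro holomorphic_intros)
  have "ball c r \<subseteq> S"
    using ball_subset_cball S(2) by (rule order.trans)
  then have hol: "\<Phi> holomorphic_on ball c r"
    using holomorphic_on_subset[OF hol\<Phi>] by blast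
  have cont: "continuous_on (cball c r) \<Phi>"
    using continuous_on_subset[OF holomorphic_on_imp_continuous_on[OF hol\<Phi>] S(2)] .
  have "norm (\<Phi> w) \<le> 1" if "w \<in> sphere c r" for w
    using sphere[OF that] by (simp add: \<Phi>_def)
  then have le: "norm (\<Phi> w) \<le> 1" if "w \<in> ball c r" for w
    using maximum_modulus_frontier[of \<Phi> "ball c r" 1 w] hol cont r that by simp
  have "Re (h z) \<noteq> 0"
  proof
    assume "Re (h z) = 0"
    then have "norm (\<Phi> z) = 1"
      by (simp add: \<Phi>_def)
    then have "\<Phi> constant_on ball c r"
      using maximum_modulus_principle[of \<Phi> "ball c r" "ball c r" z] hol z le by simp
    then obtain k where "\<And>w. w \<in> ball c r \<Longrightarrow> \<Phi> w = k"
      by (auto simp: constant_on_def)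
    then have "deriv \<Phi> z = deriv (\<lambda>_. k) z"
      using z by (intro deriv_cong_ev refl eventually_mono[OF eventually_nhds_in_open[OF open_ball z]]) auto
    moreover have "deriv \<Phi> z = exp (h z) * deriv h z"
      unfolding \<Phi>_def using holomorphic_derivI[OF holh S(1)] \<open>ball c r \<subseteq> S\<close> z
      by (intro DERIV_imp_deriv) (auto intro!: derivative_eq_intros)
    ultimately show False
      using h' by simp
  qed
  moreover have "Re (h z) \<le> 0"
    using le[OF z] by (simp add: \<Phi>_def)
  ultimately show ?thesis
    by simp
qed

lemma disc_image_below_tangent:
  fixes f f1 f2 L :: "complex \<Rightarrow> complex" and R r :: real
  assumes r: "0 < r" "r < R"
    and df: "\<And>z. z \<in> ball 0 R \<Longrightarrow> (f has_field_derivative f1 z) (at z)"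
    and dL: "\<And>z. z \<in> ball 0 R \<Longrightarrow> (L has_field_derivative f2 z / f1 z) (at z)"
    and L: "\<And>z. z \<in> ball 0 R \<Longrightarrow> exp (L z) = f1 z"
    and pos: "\<And>z. z \<in> ball 0 R \<Longrightarrow> Re (1 + z * f2 z / f1 z) > 0"
    and \<zeta>: "norm \<zeta> = r" and z: "norm z \<le> r" "z \<noteq> \<zeta>"
  shows "Re ((f z - f \<zeta>) * cnj (\<zeta> * f1 \<zeta>)) < 0"
proof (cases "norm z = r")
  case True
  then show ?thesis
    using circle_image_below_tangent[OF r df dL L pos \<zeta>] z by blast
next
  case False
  define h where "h = (\<lambda>w. (f w - f \<zeta>) * cnj (\<zeta> * f1 \<zeta>))"
  have dh: "(h has_field_derivative f1 w * cnj (\<zeta> * f1 \<zeta>)) (at w)" if "w \<in> ball 0 R" for w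
    unfolding h_def using df[OF that] by (auto intro!: derivative_eq_intros)
  have "Re (h z) < 0"
  proof (rule Re_neg_in_ball_if_nonpos_on_sphere[of h "ball 0 R"])
    show "h holomorphic_on ball 0 R"
      unfolding holomorphic_on_open[OF open_ball] using dh by blast
    show "cball 0 r \<subseteq> ball 0 R"
      using r by auto
    show "Re (h w) \<le> 0" if "w \<in> sphere 0 r" for w
      using circle_image_below_tangent[OF r df dL L pos \<zeta>, of w] that by (cases "w = \<zeta>") (auto simp: h_def)
    show "z \<in> ball 0 r"
      using z False by simp
    have "f1 z \<noteq> 0" "f1 \<zeta> \<noteq> 0" "\<zeta> \<noteq> 0"
      using L[of z, symmetric] L[of \<zeta>, symmetric] z \<zeta> r by auto
    then show "deriv h z \<noteq> 0"
      using DERIV_imp_deriv[OF dh, of z] z r by simp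
  qed simp
  then show ?thesis
    by (simp add: h_def)
qed

lemma nonvanishing_logarithm_has_derivative:
  fixes f1 f2 :: "complex \<Rightarrow> complex" and R :: real
  assumes df1: "\<And>z. z \<in> ball 0 R \<Longrightarrow> (f1 has_field_derivative f2 z) (at z)"
    and nz: "\<And>z. z \<in> ball 0 R \<Longrightarrow> f1 z \<noteq> 0"
  obtains L where "\<And>z. z \<in> ball 0 R \<Longrightarrow> (L has_field_derivative f2 z / f1 z) (at z)"
    "\<And>z. z \<in> ball 0 R \<Longrightarrow> exp (L z) = f1 z"
proof (cases "R > 0")
  case True
  have holf1: "f1 holomorphic_on ball 0 R"
    unfolding holomorphic_on_open[OF open_ball] using df1 by blast
  obtain L where holL: "L holomorphic_on ball 0 R" and L: "\<And>z. z \<in> ball 0 R \<Longrightarrow> exp (L z) = f1 z"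
    using holomorphic_logarithm_exists[OF convex_ball open_ball holf1 nz, of 0] True by auto
  have "(L has_field_derivative f2 z / f1 z) (at z)" if z: "z \<in> ball 0 R" for z
  proof -
    have dL: "(L has_field_derivative deriv L z) (at z)"
      using holomorphic_derivI[OF holL open_ball z] .
    have "((\<lambda>w. exp (L w)) has_field_derivative f2 z) (at z)"
      by (rule has_field_derivative_transform_within_open[OF df1[OF z] open_ball z]) (simp add: L)
    then have "exp (L z) * deriv L z = f2 z"
      using dL by (auto intro!: DERIV_unique derivative_eq_intros)
    then have "deriv L z = f2 z / f1 z"
      using L[OF z] nz[OF z] by (simp add: field_simps)
    then show ?thesis
      using dL by simp
  qed
  then show ?thesis
    using that L by blast
next
  case False
  then have "ball (0::complex) R = {}"
    by simp
  then show ?thesis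
    using that by (metis empty_iff)
qed

text \<open>\<open>\<zeta> * f' \<zeta>\<close> is an outer normal of the image curve \<open>f ` sphere 0 r\<close> at \<open>f \<zeta>\<close>, so this is the
  intersection of the open half-planes bounded by its tangent lines.\<close>
definition inside_tangents :: "(complex \<Rightarrow> complex) \<Rightarrow> (complex \<Rightarrow> complex) \<Rightarrow> real \<Rightarrow> complex set" where
  "inside_tangents f f' r = {w. \<forall>\<zeta>\<in>sphere 0 r. Re ((w - f \<zeta>) * cnj (\<zeta> * f' \<zeta>)) < 0}"

lemma convex_inside_tangents: "convex (inside_tangents f f' r)"
proof -
  have "inside_tangents f f' r =
      (\<Inter>\<zeta>\<in>sphere 0 r. {w. inner (\<zeta> * f' \<zeta>) w < Re (f \<zeta> * cnj (\<zeta> * f' \<zeta>))})"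
    by (auto simp: inside_tangents_def inner_complex_def algebra_simps)
  then show ?thesis
    by (simp add: convex_INT convex_halfspace_lt)
qed

lemma image_ball_eq_inside_tangents:
  fixes f f' :: "complex \<Rightarrow> complex"
  assumes holf: "f holomorphic_on ball 0 R" and inj: "inj_on f (ball 0 R)" and r: "0 < r" "r < R"
    and below: "\<And>\<zeta> z. norm \<zeta> = r \<Longrightarrow> norm z \<le> r \<Longrightarrow> z \<noteq> \<zeta> \<Longrightarrow> Re ((f z - f \<zeta>) * cnj (\<zeta> * f' \<zeta>)) < 0"
  shows "f ` ball 0 r = inside_tangents f f' r"
proof -
  have sub: "ball 0 r \<subseteq> ball 0 R" "cball 0 r \<subseteq> ball 0 R"
    using r by auto
  have inside: "f ` ball 0 r \<subseteq> inside_tangents f f' r"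
  proof
    fix w
    assume "w \<in> f ` ball 0 r"
    then obtain z where z: "norm z < r" and w: "w = f z"
      by auto
    show "w \<in> inside_tangents f f' r"
      unfolding inside_tangents_def w by (intro CollectI ballI below) (use z in auto)
  qed
  have "open (f ` ball 0 r)"
    using open_mapping_thm3[OF holomorphic_on_subset[OF holf sub(1)] open_ball inj_on_subset[OF inj sub(1)]] .
  then have "openin (top_of_set (inside_tangents f f' r)) (f ` ball 0 r)"
    using inside by (simp add: open_subset)
  moreover have "closed (f ` cball 0 r)"
    using holomorphic_on_imp_continuous_on[OF holf] continuous_on_subset[OF _ sub(2)]
    by (intro compact_imp_closed compact_continuous_image compact_cball)
  moreover have "f ` ball 0 r = inside_tangents f f' r \<inter> f ` cball 0 r"
  proof
    show "inside_tangents f f' r \<inter> f ` cball 0 r \<subseteq> f ` ball 0 r"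
      by (force simp: inside_tangents_def less_eq_real_def)
  qed (use inside in auto)
  ultimately have "closedin (top_of_set (inside_tangents f f' r)) (f ` ball 0 r)"
    "openin (top_of_set (inside_tangents f f' r)) (f ` ball 0 r)"
    by (auto intro: closedin_closed_Int)
  moreover have "f ` ball 0 r \<noteq> {}"
    using r by auto
  ultimately show ?thesis
    using convex_connected[OF convex_inside_tangents] unfolding connected_clopen by blast
qed

lemma convex_image_ball_if_convex_image_smaller_balls:
  fixes f :: "'a::real_normed_vector \<Rightarrow> 'b::real_vector"
  assumes "\<And>r. 0 < r \<Longrightarrow> r < R \<Longrightarrow> convex (f ` ball 0 r)"
  shows "convex (f ` ball 0 R)"
proof (rule convexI)
  fix x y u v
  assume x: "x \<in> f ` ball 0 R" and y: "y \<in> f ` ball 0 R" and uv: "0 \<le> u" "0 \<le> v" "u + v = (1::real)"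
  obtain z1 z2 where z: "norm z1 < R" "norm z2 < R" "x = f z1" "y = f z2"
    using x y by auto
  define M where "M = max (norm z1) (norm z2)"
  have M: "0 \<le> M" "M < R" "norm z1 \<le> M" "norm z2 \<le> M"
    using z by (auto simp: M_def le_max_iff_disj)
  define r where "r = (M + R) / 2"
  have r: "0 < r" "r < R" and "x \<in> f ` ball 0 r" "y \<in> f ` ball 0 r"
    using M z by (auto simp: r_def)
  then have "u *\<^sub>R x + v *\<^sub>R y \<in> f ` ball 0 r"
    using convexD[OF assms[OF r]] uv by blast
  then show "u *\<^sub>R x + v *\<^sub>R y \<in> f ` ball 0 R"
    using r by auto
qed

theorem convex_univalent_criterion:
  fixes f :: "complex \<Rightarrow> complex"
  assumes holf: "f holomorphic_on ball 0 R"
    and nz: "\<And>z. z \<in> ball 0 R \<Longrightarrow> deriv f z \<noteq> 0"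
    and pos: "\<And>z. z \<in> ball 0 R \<Longrightarrow> Re (1 + z * deriv (deriv f) z / deriv f z) > 0"
  shows "inj_on f (ball 0 R)" "convex (f ` ball 0 R)"
proof -
  have df: "(f has_field_derivative deriv f z) (at z)" if "z \<in> ball 0 R" for z
    using holomorphic_derivI[OF holf open_ball that] .
  have df': "(deriv f has_field_derivative deriv (deriv f) z) (at z)" if "z \<in> ball 0 R" for z
    using holomorphic_derivI[OF holomorphic_deriv[OF holf open_ball] open_ball that] .
  obtain L where dL: "\<And>z. z \<in> ball 0 R \<Longrightarrow> (L has_field_derivative deriv (deriv f) z / deriv f z) (at z)"
    and L: "\<And>z. z \<in> ball 0 R \<Longrightarrow> exp (L z) = deriv f z"
    using nonvanishing_logarithm_has_derivative[OF df' nz] by blast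
  note below = disc_image_below_tangent[OF _ _ df dL L pos]
  show inj: "inj_on f (ball 0 R)"
  proof (rule inj_onI)
    have "f z \<noteq> f \<zeta>" if "z \<in> ball 0 R" "\<zeta> \<in> ball 0 R" "norm z \<le> norm \<zeta>" "z \<noteq> \<zeta>" for z \<zeta>
      using below[where r = "norm \<zeta>" and \<zeta> = \<zeta> and z = z] that by (fastforce simp: less_eq_real_def)
    then show "z = \<zeta>" if "z \<in> ball 0 R" "\<zeta> \<in> ball 0 R" "f z = f \<zeta>" for z \<zeta>
      using that by (metis linear)
  qed
  have image: "f ` ball 0 r = inside_tangents f (deriv f) r" if "0 < r" "r < R" for r
    using image_ball_eq_inside_tangents[OF holf inj that] below[OF that] by blast
  show "convex (f ` ball 0 R)"
    by (rule convex_image_ball_if_convex_image_smaller_balls) (simp add: image convex_inside_tangents)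
qed

section \<open>Strongly convex images of the unit disc\<close>

lemma C2_with_partials_norm_squared:
  fixes G g g' :: "complex \<Rightarrow> complex"
  assumes U: "open U"
    and dG: "\<And>w. w \<in> U \<Longrightarrow> (G has_field_derivative g w) (at w)"
    and dg: "\<And>w. w \<in> U \<Longrightarrow> (g has_field_derivative g' w) (at w)"
    and cont: "continuous_on U g'"
  shows "C2_with_partials U (\<lambda>w. (norm (G w))\<^sup>2 - 1)
     (\<lambda>w. 2 * Re (cnj (G w) * g w)) (\<lambda>w. - 2 * Im (cnj (G w) * g w))
     (\<lambda>w. 2 * (norm (g w))\<^sup>2 + 2 * Re (cnj (G w) * g' w))
     (\<lambda>w. - 2 * Im (cnj (G w) * g' w))
     (\<lambda>w. 2 * (norm (g w))\<^sup>2 - 2 * Re (cnj (G w) * g' w))"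
proof -
  have D: "(G has_derivative (\<lambda>h. g z * h)) (at z)" "(g has_derivative (\<lambda>h. g' z * h)) (at z)"
    if "z \<in> U" for z
    using dG[OF that] dg[OF that] by (simp_all add: has_field_derivative_def)
  have "((\<lambda>w. (norm (G w))\<^sup>2 - 1) has_derivative
      (\<lambda>h. 2 * Re (cnj (G z) * g z) * Re h + - 2 * Im (cnj (G z) * g z) * Im h)) (at z)" if "z \<in> U" for z
  proof -
    have "((\<lambda>w. Re (cnj (G w) * G w) - 1) has_derivative
        (\<lambda>h. Re (cnj (G z) * (g z * h) + cnj (g z * h) * G z) - 0)) (at z)"
      by (intro has_derivative_diff has_derivative_Re has_derivative_mult has_derivative_cnj
          D[OF that] has_derivative_const)
    then have "((\<lambda>w. Re (cnj (G w) * G w) - 1) has_derivative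
        (\<lambda>h. 2 * Re (cnj (G z) * g z) * Re h + - 2 * Im (cnj (G z) * g z) * Im h)) (at z)"
      by (rule has_derivative_eq_rhs) (simp add: fun_eq_iff algebra_simps)
    moreover have "(\<lambda>w. Re (cnj (G w) * G w) - 1) = (\<lambda>w. (norm (G w))\<^sup>2 - 1)"
      by (rule ext) (simp only: cmod_power2, simp add: power2_eq_square)
    ultimately show ?thesis
      by simp
  qed
  moreover have "((\<lambda>w. 2 * Re (cnj (G w) * g w)) has_derivative
      (\<lambda>h. (2 * (norm (g z))\<^sup>2 + 2 * Re (cnj (G z) * g' z)) * Re h + - 2 * Im (cnj (G z) * g' z) * Im h)) (at z)"
    if "z \<in> U" for z
  proof -
    have "((\<lambda>w. 2 * Re (cnj (G w) * g w)) has_derivative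
        (\<lambda>h. 2 * Re (cnj (G z) * (g' z * h) + cnj (g z * h) * g z))) (at z)"
      by (intro has_derivative_mult_right has_derivative_Re has_derivative_mult has_derivative_cnj D[OF that])
    then show ?thesis
      by (rule has_derivative_eq_rhs) (simp only: fun_eq_iff cmod_power2, simp add: power2_eq_square algebra_simps)
  qed
  moreover have "((\<lambda>w. - 2 * Im (cnj (G w) * g w)) has_derivative
      (\<lambda>h. - 2 * Im (cnj (G z) * g' z) * Re h + (2 * (norm (g z))\<^sup>2 - 2 * Re (cnj (G z) * g' z)) * Im h)) (at z)"
    if "z \<in> U" for z
  proof -
    have "((\<lambda>w. - 2 * Im (cnj (G w) * g w)) has_derivative
        (\<lambda>h. - 2 * Im (cnj (G z) * (g' z * h) + cnj (g z * h) * g z))) (at z)"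
      by (intro has_derivative_mult_right has_derivative_Im has_derivative_mult has_derivative_cnj D[OF that])
    then show ?thesis
      by (rule has_derivative_eq_rhs) (simp only: fun_eq_iff cmod_power2, simp add: power2_eq_square algebra_simps)
  qed
  moreover have cG: "continuous_on U G" and cg: "continuous_on U g"
    using dG dg by (meson DERIV_isCont continuous_at_imp_continuous_on)+
  then have "continuous_on U (\<lambda>w. 2 * (norm (g w))\<^sup>2 + 2 * Re (cnj (G w) * g' w))"
    "continuous_on U (\<lambda>w. - 2 * Im (cnj (G w) * g' w))"
    "continuous_on U (\<lambda>w. 2 * (norm (g w))\<^sup>2 - 2 * Re (cnj (G w) * g' w))"
    by (intro continuous_intros cG cg cont)+
  ultimately show ?thesis
    unfolding C2_with_partials_def using U by blast
qed

text \<open>At a boundary point \<open>f \<zeta>\<close> of \<open>f ` ball 0 1\<close>, with \<open>G\<close> the inverse of \<open>f\<close>, the numbers \<open>g\<close> and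
  \<open>- (q * g\<^sup>2)\<close> are \<open>G'\<close> and \<open>G''\<close>, where \<open>q = f'' \<zeta> / f' \<zeta>\<close>; the form below is the real Hessian of
  \<open>(norm G)\<^sup>2\<close> in the direction \<open>(v, w)\<close>.\<close>
lemma tangential_hessian_pos:
  fixes \<zeta> g q :: complex and v w :: real
  assumes \<zeta>: "norm \<zeta> = 1" and g: "g \<noteq> 0" and pos: "Re (1 + \<zeta> * q) > 0"
    and vw: "(v, w) \<noteq> (0, 0)" and tangent: "2 * Re (cnj \<zeta> * g) * v + - 2 * Im (cnj \<zeta> * g) * w = 0"
  shows "(2 * (norm g)\<^sup>2 + 2 * Re (cnj \<zeta> * - (q * g\<^sup>2))) * v\<^sup>2
     + 2 * (- 2 * Im (cnj \<zeta> * - (q * g\<^sup>2))) * v * w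
     + (2 * (norm g)\<^sup>2 - 2 * Re (cnj \<zeta> * - (q * g\<^sup>2))) * w\<^sup>2 > 0"
proof -
  define K where "K = cnj \<zeta> * - (q * g\<^sup>2)"
  define h where "h = Complex v w"
  \<comment> \<open>\<open>h\<close> pulled back by \<open>G\<close> and rotated by \<open>cnj \<zeta>\<close>; tangency means \<open>Re X = 0\<close>\<close>
  define X where "X = cnj \<zeta> * g * h"
  have "Re X = 0"
    using tangent by (simp add: X_def h_def algebra_simps)
  then have X2: "X\<^sup>2 = - of_real ((norm X)\<^sup>2)"
    unfolding cmod_power2 by (simp add: complex_eq_iff power2_eq_square)
  have "h \<noteq> 0"
    using vw by (simp add: h_def complex_eq_iff)
  moreover have "\<zeta> \<noteq> 0"
    using \<zeta> by auto
  ultimately have "X \<noteq> 0"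
    using g by (simp add: X_def)
  have "\<zeta> * cnj \<zeta> = 1"
    using \<zeta> complex_norm_square[of \<zeta>] by simp
  then have "K * h\<^sup>2 = - (\<zeta> * q * X\<^sup>2)"
    by (simp add: K_def X_def power2_eq_square algebra_simps)
  then have "Re (K * h\<^sup>2) = (norm X)\<^sup>2 * Re (\<zeta> * q)"
    unfolding X2 by simp
  moreover have "(norm X)\<^sup>2 = (norm g)\<^sup>2 * (norm h)\<^sup>2"
    using \<zeta> by (simp add: X_def norm_mult power_mult_distrib)
  ultimately have "2 * (norm g)\<^sup>2 * (norm h)\<^sup>2 + 2 * Re (K * h\<^sup>2) = 2 * (norm X)\<^sup>2 * Re (1 + \<zeta> * q)"
    by (simp add: algebra_simps)
  also have "\<dots> > 0"
    using \<open>X \<noteq> 0\<close> pos by simp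
  moreover have "(2 * (norm g)\<^sup>2 + 2 * Re K) * v\<^sup>2 + 2 * (- 2 * Im K) * v * w + (2 * (norm g)\<^sup>2 - 2 * Re K) * w\<^sup>2
      = 2 * (norm g)\<^sup>2 * (norm h)\<^sup>2 + 2 * Re (K * h\<^sup>2)"
    unfolding cmod_power2 by (simp add: h_def power2_eq_square algebra_simps)
  ultimately show ?thesis
    by (simp add: K_def)
qed

lemma holomorphic_inverse_derivatives:
  fixes f G :: "complex \<Rightarrow> complex"
  assumes holf: "f holomorphic_on S" and S: "open S" and inj: "inj_on f S"
    and holG: "G holomorphic_on f ` S" and dG: "\<And>z. z \<in> S \<Longrightarrow> deriv f z * deriv G (f z) = 1"
    and G: "\<And>z. z \<in> S \<Longrightarrow> G (f z) = z"
  shows "\<And>w. w \<in> f ` S \<Longrightarrow> (G has_field_derivative 1 / deriv f (G w)) (at w)"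
    and "\<And>w. w \<in> f ` S \<Longrightarrow> ((\<lambda>w. 1 / deriv f (G w)) has_field_derivative
          - (deriv (deriv f) (G w) / deriv f (G w) * (1 / deriv f (G w))\<^sup>2)) (at w)"
    and "continuous_on (f ` S) (\<lambda>w. - (deriv (deriv f) (G w) / deriv f (G w) * (1 / deriv f (G w))\<^sup>2))"
proof -
  have U: "open (f ` S)"
    using open_mapping_thm3[OF holf S inj] .
  have GS: "G w \<in> S" if "w \<in> f ` S" for w
    using that G by auto
  have nz: "deriv f (G w) \<noteq> 0" if "w \<in> f ` S" for w
    using holomorphic_injective_imp_regular[OF holf S inj GS[OF that]] .
  have holf': "deriv f holomorphic_on S"
    using holf S by (rule holomorphic_deriv)
  show d1: "(G has_field_derivative 1 / deriv f (G w)) (at w)" if "w \<in> f ` S" for w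
  proof -
    have "deriv G w = 1 / deriv f (G w)"
      using that dG G nz[OF that] by (auto simp: field_simps)
    then show ?thesis
      using holomorphic_derivI[OF holG U that] by simp
  qed
  show "((\<lambda>w. 1 / deriv f (G w)) has_field_derivative
      - (deriv (deriv f) (G w) / deriv f (G w) * (1 / deriv f (G w))\<^sup>2)) (at w)" if "w \<in> f ` S" for w
  proof -
    have "((\<lambda>w. deriv f (G w)) has_field_derivative deriv (deriv f) (G w) * (1 / deriv f (G w))) (at w)"
      using DERIV_chain2[OF holomorphic_derivI[OF holf' S GS[OF that]] d1[OF that]] .
    then show ?thesis
      using nz[OF that] by (auto intro!: derivative_eq_intros simp: power2_eq_square field_simps)
  qed
  have "(\<lambda>w. deriv f (G w)) holomorphic_on f ` S" "(\<lambda>w. deriv (deriv f) (G w)) holomorphic_on f ` S"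
    using holomorphic_deriv_compose[OF holf holG _ S] holomorphic_deriv_compose[OF holf' holG _ S] GS
    by blast+
  then show "continuous_on (f ` S) (\<lambda>w. - (deriv (deriv f) (G w) / deriv f (G w) * (1 / deriv f (G w))\<^sup>2))"
    using nz by (intro holomorphic_on_imp_continuous_on holomorphic_intros) auto
qed

lemma frontier_image_ball_subset:
  fixes f :: "'a::heine_borel \<Rightarrow> 'b::t2_space"
  assumes cont: "continuous_on (cball c r) f" and open_image: "open (f ` ball c r)"
  shows "closure (f ` ball c r) \<subseteq> f ` cball c r" "frontier (f ` ball c r) \<subseteq> f ` sphere c r"
proof -
  have "closed (f ` cball c r)"
    using cont by (intro compact_imp_closed compact_continuous_image compact_cball)
  then show closure: "closure (f ` ball c r) \<subseteq> f ` cball c r"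
    by (intro closure_minimal image_mono ball_subset_cball)
  show "frontier (f ` ball c r) \<subseteq> f ` sphere c r"
  proof
    fix w
    assume "w \<in> frontier (f ` ball c r)"
    then have "w \<in> f ` cball c r" "w \<notin> f ` ball c r"
      using closure open_image by (auto simp: frontier_def interior_open)
    then show "w \<in> f ` sphere c r"
      by (auto simp: less_eq_real_def)
  qed
qed

definition has_strictly_convex_defining_function :: "complex set \<Rightarrow> bool" where
  "has_strictly_convex_defining_function D \<longleftrightarrow>
     (\<exists>U r rx ry rxx rxy ryy.
        C2_with_partials U r rx ry rxx rxy ryy \<and>
        closure D \<subseteq> U \<and> D = {z\<in>U. r z < 0} \<and>
        (\<forall>z\<in>frontier D. r z = 0 \<and> (rx z, ry z) \<noteq> (0, 0) \<and>
           (\<forall>v w::real. (v, w) \<noteq> (0, 0) \<and> rx z * v + ry z * w = 0 \<longrightarrow>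
              rxx z * v\<^sup>2 + 2 * rxy z * v * w + ryy z * w\<^sup>2 > 0)))"

lemma inverse_norm_squared_defining_function:
  fixes f :: "complex \<Rightarrow> complex" and \<rho> :: real
  assumes holf: "f holomorphic_on ball 0 \<rho>" and \<rho>: "1 < \<rho>" and inj: "inj_on f (ball 0 \<rho>)"
    and pos: "\<And>\<zeta>. \<zeta> \<in> sphere 0 1 \<Longrightarrow> Re (1 + \<zeta> * deriv (deriv f) \<zeta> / deriv f \<zeta>) > 0"
  shows "has_strictly_convex_defining_function (f ` ball 0 1)"
proof -
  have sub: "ball 0 1 \<subseteq> ball 0 \<rho>" "cball 0 1 \<subseteq> ball 0 \<rho>"
    using \<rho> by auto
  obtain G where holG: "G holomorphic_on f ` ball 0 \<rho>"
    and dG: "\<And>z. z \<in> ball 0 \<rho> \<Longrightarrow> deriv f z * deriv G (f z) = 1"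
    and G: "\<And>z. z \<in> ball 0 \<rho> \<Longrightarrow> G (f z) = z"
    by (fact holomorphic_has_inverse[OF holf open_ball inj])
  note inverse = holomorphic_inverse_derivatives[OF holf open_ball inj holG dG G]
  define g where "g = (\<lambda>w. 1 / deriv f (G w))"
  define q where "q = (\<lambda>w. deriv (deriv f) (G w) / deriv f (G w))"
  have C2: "C2_with_partials (f ` ball 0 \<rho>) (\<lambda>w. (norm (G w))\<^sup>2 - 1)
     (\<lambda>w. 2 * Re (cnj (G w) * g w)) (\<lambda>w. - 2 * Im (cnj (G w) * g w))
     (\<lambda>w. 2 * (norm (g w))\<^sup>2 + 2 * Re (cnj (G w) * - (q w * (g w)\<^sup>2)))
     (\<lambda>w. - 2 * Im (cnj (G w) * - (q w * (g w)\<^sup>2)))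
     (\<lambda>w. 2 * (norm (g w))\<^sup>2 - 2 * Re (cnj (G w) * - (q w * (g w)\<^sup>2)))"
    unfolding g_def q_def using open_mapping_thm3[OF holf open_ball inj]
    by (rule C2_with_partials_norm_squared[OF _ inverse])
  have "continuous_on (cball 0 1) f"
    using continuous_on_subset[OF holomorphic_on_imp_continuous_on[OF holf] sub(2)] .
  moreover have "open (f ` ball 0 1)"
    using open_mapping_thm3[OF holomorphic_on_subset[OF holf sub(1)] open_ball inj_on_subset[OF inj sub(1)]] .
  ultimately have closure: "closure (f ` ball 0 1) \<subseteq> f ` cball 0 1"
    and frontier: "frontier (f ` ball 0 1) \<subseteq> f ` sphere 0 1"
    by (rule frontier_image_ball_subset)+
  have "(norm (G (f z)))\<^sup>2 - 1 < 0 \<longleftrightarrow> z \<in> ball 0 1" if "z \<in> ball 0 \<rho>" for z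
    using G[OF that] by (simp add: abs_square_less_1)
  then have "f ` ball 0 1 = {w \<in> f ` ball 0 \<rho>. (norm (G w))\<^sup>2 - 1 < 0}"
    using sub(1) by blast
  moreover have "closure (f ` ball 0 1) \<subseteq> f ` ball 0 \<rho>"
    using closure sub(2) by (meson image_mono order.trans)
  moreover have "(norm (G w))\<^sup>2 - 1 = 0 \<and>
      (2 * Re (cnj (G w) * g w), - 2 * Im (cnj (G w) * g w)) \<noteq> (0, 0) \<and>
      (\<forall>v u. (v, u) \<noteq> (0, 0) \<and> 2 * Re (cnj (G w) * g w) * v + - 2 * Im (cnj (G w) * g w) * u = 0 \<longrightarrow>
        (2 * (norm (g w))\<^sup>2 + 2 * Re (cnj (G w) * - (q w * (g w)\<^sup>2))) * v\<^sup>2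
        + 2 * (- 2 * Im (cnj (G w) * - (q w * (g w)\<^sup>2))) * v * u
        + (2 * (norm (g w))\<^sup>2 - 2 * Re (cnj (G w) * - (q w * (g w)\<^sup>2))) * u\<^sup>2 > 0)"
    if w: "w \<in> frontier (f ` ball 0 1)" for w
  proof -
    obtain \<zeta> where \<zeta>: "norm \<zeta> = 1" "w = f \<zeta>"
      using frontier w by auto
    then have G\<zeta>: "G w = \<zeta>"
      using G[of \<zeta>] \<rho> by simp
    have g: "g w \<noteq> 0"
      using holomorphic_injective_imp_regular[OF holf open_ball inj, of \<zeta>] \<zeta>(1) \<rho> by (simp add: g_def G\<zeta>)
    have q: "Re (1 + \<zeta> * q w) > 0"
      using pos[of \<zeta>] \<zeta>(1) by (simp add: q_def G\<zeta>)
    have "(2 * Re X, - 2 * Im X) \<noteq> (0, 0)" if "X \<noteq> 0" for X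
      using that by (simp add: complex_eq_iff)
    moreover have "cnj \<zeta> * g w \<noteq> 0"
      using g \<zeta>(1) by auto
    ultimately have "(2 * Re (cnj \<zeta> * g w), - 2 * Im (cnj \<zeta> * g w)) \<noteq> (0, 0)"
      by blast
    then show ?thesis
      unfolding G\<zeta> using \<zeta>(1) tangential_hessian_pos[OF \<zeta>(1) g q] by simp
  qed
  ultimately show ?thesis
    unfolding has_strictly_convex_defining_function_def using C2
    by (intro exI conjI) (assumption | rule ballI)+
qed

theorem strongly_convex_image_unit_ball:
  fixes f :: "complex \<Rightarrow> complex" and \<rho> :: real
  assumes holf: "f holomorphic_on ball 0 \<rho>" and \<rho>: "1 < \<rho>" and inj: "inj_on f (ball 0 \<rho>)"
    and pos: "\<And>z. z \<in> cball 0 1 \<Longrightarrow> Re (1 + z * deriv (deriv f) z / deriv f z) > 0"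
  shows "strongly_convex (f ` ball 0 1)"
proof -
  have sub: "ball 0 1 \<subseteq> ball 0 \<rho>" "cball 0 1 \<subseteq> ball 0 \<rho>"
    using \<rho> by auto
  have holf1: "f holomorphic_on ball 0 1"
    using holomorphic_on_subset[OF holf sub(1)] .
  have "convex (f ` ball 0 1)"
  proof (rule convex_univalent_criterion(2)[OF holf1])
    show "deriv f z \<noteq> 0" if "z \<in> ball 0 1" for z
      using holomorphic_injective_imp_regular[OF holf open_ball inj] sub that by blast
    show "Re (1 + z * deriv (deriv f) z / deriv f z) > 0" if "z \<in> ball 0 1" for z
      using pos that by simp
  qed
  moreover have "open (f ` ball 0 1)"
    using open_mapping_thm3[OF holf1 open_ball inj_on_subset[OF inj sub(1)]] .
  moreover have "bounded (f ` ball 0 1)"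
    using holomorphic_on_imp_continuous_on[OF holf] sub
    by (meson bounded_subset compact_cball compact_continuous_image compact_imp_bounded
        continuous_on_subset image_mono ball_subset_cball)
  moreover have "has_strictly_convex_defining_function (f ` ball 0 1)"
    using inverse_norm_squared_defining_function[OF holf \<rho> inj] pos by simp
  ultimately show ?thesis
    unfolding strongly_convex_def has_strictly_convex_defining_function_def[symmetric]
    using convex_connected by auto
qed

lemma open_superset_of_cball_contains_larger_ball:
  fixes c :: "'a::euclidean_space"
  assumes S: "open S" "cball c r \<subseteq> S" and r: "0 \<le> r"
  obtains \<rho> where "r < \<rho>" "ball c \<rho> \<subseteq> S"
proof -
  obtain \<epsilon> where \<epsilon>: "\<epsilon> > 0" "(\<Union>x\<in>cball c r. ball x \<epsilon>) \<subseteq> S"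
    using compact_subset_open_imp_ball_epsilon_subset[OF compact_cball S(1,2)] by blast
  have "z \<in> S" if z: "dist c z < r + \<epsilon>" for z
  proof (cases "dist c z \<le> r")
    case True
    then show ?thesis
      using S(2) by auto
  next
    case False
    then have "z \<noteq> c"
      using r by auto
    define x where "x = c + (r / dist c z) *\<^sub>R (z - c)"
    have "dist c x = r"
      using False r \<open>z \<noteq> c\<close> by (simp add: x_def dist_norm norm_minus_commute[of c z])
    moreover have "dist x z = dist c z - r"
    proof -
      have "x - z = - ((1 - r / dist c z) *\<^sub>R (z - c))"
        by (simp add: x_def algebra_simps)
      moreover have "0 \<le> 1 - r / dist c z"
        using False by (simp add: divide_le_eq_1)
      ultimately have "dist x z = (1 - r / dist c z) * dist c z"
        by (simp add: dist_norm norm_minus_commute[of c z])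
      then show ?thesis
        using \<open>z \<noteq> c\<close> by (simp add: left_diff_distrib)
    qed
    ultimately have "x \<in> cball c r" "z \<in> ball x \<epsilon>"
      using z by auto
    then show ?thesis
      using \<epsilon>(2) by blast
  qed
  then show ?thesis
    using that[of "r + \<epsilon>"] \<epsilon>(1) by (auto simp: subset_iff)
qed

lemma primitive_extends_to_larger_ball:
  fixes F f' :: "complex \<Rightarrow> complex"
  assumes holf': "f' holomorphic_on ball c R" and "r \<le> R"
    and dF: "\<And>z. z \<in> ball c r \<Longrightarrow> (F has_field_derivative f' z) (at z)"
  obtains G where "\<And>z. z \<in> ball c R \<Longrightarrow> (G has_field_derivative f' z) (at z)"
    "\<And>z. z \<in> ball c r \<Longrightarrow> G z = F z"
proof -
  obtain G0 where "\<And>z. z \<in> ball c R \<Longrightarrow> (G0 has_field_derivative f' z) (at z within ball c R)"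
    using holomorphic_convex_primitive'[OF convex_ball open_ball holf'] by blast
  then have dG0: "(G0 has_field_derivative f' z) (at z)" if "z \<in> ball c R" for z
    using that at_within_open[OF that open_ball] by metis
  have "\<exists>k. \<forall>z\<in>ball c r. F z - G0 z = k"
  proof (rule has_field_derivative_zero_constant[OF convex_ball])
    fix z
    assume "z \<in> ball c r"
    then have "((\<lambda>z. F z - G0 z) has_field_derivative f' z - f' z) (at z)"
      using dF dG0 \<open>r \<le> R\<close> by (auto intro!: derivative_eq_intros)
    then show "((\<lambda>z. F z - G0 z) has_field_derivative 0) (at z within ball c r)"
      by (simp add: has_field_derivative_at_within)
  qed
  then obtain k where k: "\<And>z. z \<in> ball c r \<Longrightarrow> F z - G0 z = k"
    by blast
  show ?thesis
  proof (rule that)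
    show "((\<lambda>z. G0 z + k) has_field_derivative f' z) (at z)" if "z \<in> ball c R" for z
      using dG0[OF that] by (auto intro!: derivative_eq_intros)
    show "G0 z + k = F z" if "z \<in> ball c r" for z
      using k[OF that] by (simp add: algebra_simps)
  qed
qed

section \<open>Derivatives of the form \<open>c / (1 + a z + l z\<^sup>2)\<close>\<close>

lemma Re_mult_cnj_quadratic_expand:
  fixes a l z :: complex
  shows "Re ((1 - l*z\<^sup>2) * cnj (1 + a*z + l*z\<^sup>2)) =
     1 - (norm l)\<^sup>2 * ((norm z)\<^sup>2)\<^sup>2 + Re ((a - of_real ((norm z)\<^sup>2) * cnj a * l) * z)"
  unfolding cmod_power2 by (simp add: power2_eq_square algebra_simps)

lemma twisted_coefficient_interpolation:
  fixes a l :: complex and s :: real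
  defines "b \<equiv> a - cnj a * l"
  shows "of_real (1 - (norm l)\<^sup>2) * (a - of_real s * cnj a * l) =
     b * of_real (1 - s * (norm l)\<^sup>2) + cnj b * l * of_real (1 - s)"
proof -
  have "(complex_of_real (norm l))\<^sup>2 = l * cnj l"
    using complex_norm_square by simp
  then show ?thesis
    by (simp add: b_def algebra_simps)
qed

lemma norm_twisted_coefficient_le:
  fixes a l :: complex and s :: real
  assumes l: "norm l < 1" and b: "norm (a - cnj a * l) \<le> 1 - (norm l)\<^sup>2"
    and s: "0 \<le> s" "s \<le> 1"
  shows "norm (a - of_real s * cnj a * l) \<le> (1 - s * (norm l)\<^sup>2) + norm l * (1 - s)"
proof -
  define m where "m = norm l"
  define b where "b = a - cnj a * l"
  define K where "K = (1 - s * m\<^sup>2) + m * (1 - s)"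
  have m: "0 \<le> m" "m < 1" "m\<^sup>2 < 1" and B: "norm b \<le> 1 - m\<^sup>2"
    using l b by (auto simp: m_def b_def abs_square_less_1)
  have sm: "0 \<le> 1 - s * m\<^sup>2" "0 \<le> 1 - s"
    using s m by (simp_all add: mult_le_one)
  have K: "0 \<le> K"
    using s m sm by (simp add: K_def)
  have "(1 - m\<^sup>2) * norm (a - of_real s * cnj a * l) = norm (of_real (1 - m\<^sup>2) * (a - of_real s * cnj a * l))"
    using m by (simp only: norm_mult norm_of_real abs_of_nonneg)
  also have "\<dots> = norm (b * of_real (1 - s * m\<^sup>2) + cnj b * l * of_real (1 - s))"
    using twisted_coefficient_interpolation[of l a s] by (simp only: m_def b_def)
  also have "\<dots> \<le> norm b * (1 - s * m\<^sup>2) + norm b * m * (1 - s)"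
    using norm_triangle_ineq[of "b * of_real (1 - s * m\<^sup>2)" "cnj b * l * of_real (1 - s)"] sm
    by (simp only: norm_mult norm_of_real complex_mod_cnj abs_of_nonneg m_def)
  also have "\<dots> = norm b * K"
    by (simp add: K_def algebra_simps)
  also have "\<dots> \<le> (1 - m\<^sup>2) * K"
    using B K by (rule mult_right_mono)
  finally show ?thesis
    using m by (simp add: K_def m_def)
qed

lemma Re_convexity_numerator_pos:
  fixes a l z :: complex
  assumes l: "norm l < 1" and b: "norm (a - cnj a * l) \<le> 1 - (norm l)\<^sup>2"
    and z: "norm z \<le> 1" and strict: "norm z < 1 \<or> norm (a - cnj a * l) < 1 - (norm l)\<^sup>2"
  shows "Re ((1 - l*z\<^sup>2) * cnj (1 + a*z + l*z\<^sup>2)) > 0"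
proof -
  define m where "m = norm l"
  define t where "t = norm z"
  have m: "0 \<le> m" "m < 1" and t: "0 \<le> t" "t \<le> 1" "t\<^sup>2 \<le> 1"
    using l z by (auto simp: m_def t_def power_le_one)
  have "Re ((1 - l*z\<^sup>2) * cnj (1 + a*z + l*z\<^sup>2)) \<ge> 1 - m\<^sup>2 * (t\<^sup>2)\<^sup>2 - norm (a - of_real (t\<^sup>2) * cnj a * l) * t"
    using Re_mult_cnj_quadratic_expand[of l z a] abs_Re_le_cmod[of "(a - of_real (t\<^sup>2) * cnj a * l) * z"]
    by (simp add: m_def t_def norm_mult)
  moreover have "1 - m\<^sup>2 * (t\<^sup>2)\<^sup>2 - norm (a - of_real (t\<^sup>2) * cnj a * l) * t > 0"
  proof (cases "t < 1")
    case True
    have "norm (a - of_real (t\<^sup>2) * cnj a * l) * t \<le> ((1 - t\<^sup>2 * m\<^sup>2) + m * (1 - t\<^sup>2)) * t"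
      using norm_twisted_coefficient_le[OF l b, of "t\<^sup>2"] t by (simp add: m_def mult_right_mono)
    moreover have "1 - m\<^sup>2 * (t\<^sup>2)\<^sup>2 - ((1 - t\<^sup>2 * m\<^sup>2) + m * (1 - t\<^sup>2)) * t = (1 - t) * (1 - m*t) * (1 - m*t\<^sup>2)"
      by (simp add: algebra_simps power2_eq_square power4_eq_xxxx)
    moreover have "m * t < 1" "m * t\<^sup>2 < 1"
      using m t mult_left_le[of t m] mult_left_le[of "t\<^sup>2" m] by linarith+
    ultimately show ?thesis
      using True by (smt (verit) mult_pos_pos)
  next
    case False
    then show ?thesis
      using strict t by (simp add: m_def t_def)
  qed
  ultimately show ?thesis
    by linarith
qed

lemma Re_convexity_quotient_reciprocal_quadratic:
  fixes F :: "complex \<Rightarrow> complex" and a l z :: complex and c :: real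
  assumes S: "open S" "z \<in> S" and c: "c \<noteq> 0"
    and dF: "\<And>w. w \<in> S \<Longrightarrow> deriv F w = c / (1 + a*w + l*w\<^sup>2)"
    and pos: "Re ((1 - l*z\<^sup>2) * cnj (1 + a*z + l*z\<^sup>2)) > 0"
  shows "deriv F z \<noteq> 0" "Re (1 + z * deriv (deriv F) z / deriv F z) > 0"
proof -
  define p where "p = 1 + a*z + l*z\<^sup>2"
  have p: "p \<noteq> 0"
    using pos unfolding p_def[symmetric] by auto
  have F': "deriv F z = c / p"
    using dF[OF S(2)] by (simp add: p_def)
  then show "deriv F z \<noteq> 0"
    using p c by simp
  have "deriv (deriv F) z = deriv (\<lambda>w. c / (1 + a*w + l*w\<^sup>2)) z"
    using S dF by (intro deriv_cong_ev refl eventually_mono[OF eventually_nhds_in_open[OF S]]) auto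
  also have "\<dots> = - (c * (a + 2*l*z)) / p\<^sup>2"
    using p unfolding p_def
    by (intro DERIV_imp_deriv) (auto intro!: derivative_eq_intros simp: field_simps power2_eq_square)
  finally have F'': "deriv (deriv F) z = - (c * (a + 2*l*z)) / p\<^sup>2" .
  have "1 + z * deriv (deriv F) z / deriv F z = (p - z * (a + 2*l*z)) / p"
    unfolding F' F'' using p c by (simp add: field_simps power2_eq_square)
  also have "p - z * (a + 2*l*z) = 1 - l*z\<^sup>2"
    by (simp add: p_def power2_eq_square algebra_simps)
  finally have "1 + z * deriv (deriv F) z / deriv F z = (1 - l*z\<^sup>2) / p" .
  moreover have "Re ((1 - l*z\<^sup>2) / p) = Re ((1 - l*z\<^sup>2) * cnj p) / (norm p)\<^sup>2"
    by (simp add: Re_divide')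
  ultimately show "Re (1 + z * deriv (deriv F) z / deriv F z) > 0"
    using pos p by (simp add: p_def)
qed

lemma strongly_convex_image_if_strict:
  fixes a l :: complex and c :: real and F :: "complex \<Rightarrow> complex"
  assumes l: "norm l < 1" and strict: "norm (a - cnj a * l) < 1 - (norm l)\<^sup>2" and c: "c > 0"
    and holF: "F holomorphic_on ball 0 1"
    and dF: "\<And>z. z \<in> ball 0 1 \<Longrightarrow> deriv F z = c / (1 + a*z + l*z\<^sup>2)"
  shows "strongly_convex (F ` ball 0 1)"
proof -
  define B where "B = {z. Re ((1 - l*z\<^sup>2) * cnj (1 + a*z + l*z\<^sup>2)) > 0}"
  have "open B"
    unfolding B_def by (intro open_Collect_less continuous_intros)
  moreover have "cball 0 1 \<subseteq> B"
    using Re_convexity_numerator_pos[OF l less_imp_le[OF strict]] strict by (auto simp: B_def)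
  ultimately obtain \<rho> where \<rho>: "1 < \<rho>" "ball 0 \<rho> \<subseteq> B"
    using open_superset_of_cball_contains_larger_ball[OF _ _ zero_le_one] by blast
  have "1 + a*z + l*z\<^sup>2 \<noteq> 0" if "z \<in> ball 0 \<rho>" for z
  proof
    assume p: "1 + a*z + l*z\<^sup>2 = 0"
    have "Re ((1 - l*z\<^sup>2) * cnj (1 + a*z + l*z\<^sup>2)) > 0"
      using \<rho>(2) that unfolding B_def by blast
    then show False
      unfolding p by simp
  qed
  then have hol: "(\<lambda>z. c / (1 + a*z + l*z\<^sup>2)) holomorphic_on ball 0 \<rho>"
    by (intro holomorphic_intros) auto
  have dF': "(F has_field_derivative c / (1 + a*z + l*z\<^sup>2)) (at z)" if "z \<in> ball 0 1" for z
    using holomorphic_derivI[OF holF open_ball that] dF[OF that] by simp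
  obtain Ft where dFt: "\<And>z. z \<in> ball 0 \<rho> \<Longrightarrow> (Ft has_field_derivative c / (1 + a*z + l*z\<^sup>2)) (at z)"
    and FtF: "\<And>z. z \<in> ball 0 1 \<Longrightarrow> Ft z = F z"
    using primitive_extends_to_larger_ball[OF hol less_imp_le[OF \<rho>(1)] dF'] by blast
  have holFt: "Ft holomorphic_on ball 0 \<rho>"
    unfolding holomorphic_on_open[OF open_ball] using dFt by blast
  have quotient: "deriv Ft z \<noteq> 0" "Re (1 + z * deriv (deriv Ft) z / deriv Ft z) > 0" if "z \<in> ball 0 \<rho>" for z
    using Re_convexity_quotient_reciprocal_quadratic[OF open_ball that, of c Ft a l] DERIV_imp_deriv[OF dFt]
      \<rho>(2) that c by (auto simp: B_def)
  then have "inj_on Ft (ball 0 \<rho>)"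
    using convex_univalent_criterion(1)[OF holFt] by blast
  then have "strongly_convex (Ft ` ball 0 1)"
    using strongly_convex_image_unit_ball[OF holFt \<rho>(1)] quotient \<rho>(1) by force
  moreover have "Ft ` ball 0 1 = F ` ball 0 1"
    using FtF by (rule image_cong[OF refl])
  ultimately show ?thesis
    by simp
qed

theorem lemma3p2:
  fixes a l :: complex and c :: real and F :: "complex \<Rightarrow> complex"
  assumes "norm l < 1"
    and "norm (a - cnj a * l) \<le> 1 - (norm l)\<^sup>2"
    and "c > 0"
    and "F holomorphic_on ball 0 1"
    and "\<forall>z\<in>ball 0 1. deriv F z = of_real c / (1 + a * z + l * z\<^sup>2)"
  shows "inj_on F (ball 0 1) \<and> open (F ` ball 0 1) \<and>
         (\<exists>G. G holomorphic_on F ` ball 0 1 \<and> (\<forall>z\<in>ball 0 1. G (F z) = z)) \<and>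
         convex (F ` ball 0 1) \<and>
         (norm (a - cnj a * l) < 1 - (norm l)\<^sup>2 \<longrightarrow>
            bounded (F ` ball 0 1) \<and> strongly_convex (F ` ball 0 1))"
proof -
  note l = assms(1) and b = assms(2) and c = assms(3) and holF = assms(4) and dF = assms(5)
  have "deriv F z \<noteq> 0 \<and> Re (1 + z * deriv (deriv F) z / deriv F z) > 0" if "z \<in> ball 0 1" for z
    using Re_convexity_quotient_reciprocal_quadratic[OF open_ball that, of c F a l]
      Re_convexity_numerator_pos[OF l b, of z] dF c that by auto
  then have inj: "inj_on F (ball 0 1)" and convex: "convex (F ` ball 0 1)"
    using convex_univalent_criterion[OF holF] by auto
  have "open (F ` ball 0 1)"
    using open_mapping_thm3[OF holF open_ball inj] .
  moreover obtain G where "G holomorphic_on F ` ball 0 1"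
    and "\<And>z. z \<in> ball 0 1 \<Longrightarrow> deriv F z * deriv G (F z) = 1" and "\<And>z. z \<in> ball 0 1 \<Longrightarrow> G (F z) = z"
    by (fact holomorphic_has_inverse[OF holF open_ball inj])
  moreover have "bounded (F ` ball 0 1) \<and> strongly_convex (F ` ball 0 1)"
    if "norm (a - cnj a * l) < 1 - (norm l)\<^sup>2"
    using strongly_convex_image_if_strict[OF l that c holF] dF by (auto simp: strongly_convex_def)
  ultimately show ?thesis
    using inj convex by blast
qed

end
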